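(* Let $X$ be a finite set with a transitive action of a finite group $G$, let $\pi$ be the induced permutation representation of $G$ on $\mathcal H_X$, and let $\mathcal T$ be the commutant of $\pi(G)$. If $T\in\mathcal T$, then for any $x_0\in X$, \[\|T\|_m=\|S_T|_{\mathcal T}\|=|X|^{-1}\operatorname{Tr}(|T|)=\langle|T|e_{x_0},e_{x_0}\rangle.\]
   Context: $\mathcal H_X$ is the Hilbert space with orthonormal basis $\{e_x:x\in X\}$, and $\pi(g)e_x=e_{gx}$. For a matrix $T=[t_{xy}]$, $S_T$ is the Schur multiplier $R=[r_{xy}]\mapsto[t_{xy}r_{xy}]$ on $\mathcal B(\mathcal H_X)$, $\|T\|_m$ is its norm, and $\|S_T|_{\mathcal T}\|$ is the norm of its restriction to $\mathcal T$ (with the operator norm). $|T|=(T^*T)^{1/2}$. *)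

theory Defs
  imports "HOL-Analysis.Analysis" "HOL-Algebra.Group_Action"
begin

text \<open>Matrices on H_X, X a finite type 'x, are elements of complex^'x^'x
  (row index first); vectors complex^'x carry the Euclidean (l2) norm.\<close>

definition opnorm :: "complex^'x::finite^'x \<Rightarrow> real" where
  "opnorm A = onorm (\<lambda>v. A *v v)"

definition cadj :: "complex^'x::finite^'x \<Rightarrow> complex^'x^'x" where
  "cadj A = (\<chi> i j. cnj (A $ j $ i))"

definition cinner :: "complex^'x::finite \<Rightarrow> complex^'x \<Rightarrow> complex" where
  "cinner v w = (\<Sum>i\<in>UNIV. v $ i * cnj (w $ i))"

definition psd :: "complex^'x::finite^'x \<Rightarrow> bool" where
  "psd A \<longleftrightarrow> cadj A = A \<and> (\<forall>v. Im (cinner (A *v v) v) = 0 \<and> 0 \<le> Re (cinner (A *v v) v))"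

definition mabs :: "complex^'x::finite^'x \<Rightarrow> complex^'x^'x" where
  "mabs T = (THE P. psd P \<and> P ** P = cadj T ** T)"

definition mtrace :: "complex^'x::finite^'x \<Rightarrow> complex" where
  "mtrace A = (\<Sum>i\<in>UNIV. A $ i $ i)"

definition basis_vec :: "'x::finite \<Rightarrow> complex^'x" where
  "basis_vec x = (\<chi> y. if y = x then 1 else 0)"

definition schur :: "complex^'x::finite^'x \<Rightarrow> complex^'x^'x \<Rightarrow> complex^'x^'x" where
  "schur T R = (\<chi> i j. T $ i $ j * R $ i $ j)"

definition multiplier_norm :: "complex^'x::finite^'x \<Rightarrow> real" where
  "multiplier_norm T = (SUP R\<in>{R. opnorm R \<le> 1}. opnorm (schur T R))"

definition restricted_multiplier_norm ::
  "complex^'x::finite^'x \<Rightarrow> (complex^'x^'x) set \<Rightarrow> real" where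
  "restricted_multiplier_norm T \<T> = (SUP R\<in>{R\<in>\<T>. opnorm R \<le> 1}. opnorm (schur T R))"

definition perm_rep :: "('g \<Rightarrow> 'x \<Rightarrow> 'x) \<Rightarrow> 'g \<Rightarrow> complex^'x::finite^'x" where
  "perm_rep \<phi> g = (\<chi> i j. if i = \<phi> g j then 1 else 0)"

definition commutant :: "(complex^'x::finite^'x) set \<Rightarrow> (complex^'x^'x) set" where
  "commutant S = {T. \<forall>A\<in>S. T ** A = A ** T}"

end

theory Submission
  imports Defs
begin

text \<open>
  Every matrix built from \<open>T\<close> and \<open>T\<^sup>*\<close> by products and functional calculus commutes with the
  transitive permutation representation, hence has constant diagonal, equal to its trace divided
  by \<open>|X|\<close>. Put \<open>t = Tr |T| / |X| = \<langle>|T| e\<^sub>x, e\<^sub>x\<rangle>\<close> and let \<open>T = W |T|\<close> be the polar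
  decomposition. In the factorisation \<open>T = (W |T|\<^sup>1\<^sup>/\<^sup>2) |T|\<^sup>1\<^sup>/\<^sup>2\<close> the squared row norms of the
  first factor form the diagonal of \<open>T W\<^sup>*\<close> and the squared column norms of the second the
  diagonal of \<open>|T|\<close>, so all of them equal \<open>t\<close>, and Cauchy-Schwarz gives \<open>\<parallel>S\<^sub>T\<parallel> \<le> t\<close>.
  Conversely the contraction \<open>W\<close> with conjugated entries lies in the commutant, and
  \<open>\<langle>S\<^sub>T(W) 1, 1\<rangle> = Tr (W\<^sup>* T) = Tr |T| = |X| t\<close> while \<open>\<parallel>1\<parallel>\<^sup>2 = |X|\<close>, so already the
  restricted norm is at least \<open>t\<close>.

  The spectral theorem for Hermitian matrices, on which \<open>|T|\<close> and \<open>W\<close> rest, is proved by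
  maximising the Rayleigh quotient on invariant subspaces.
\<close>

lemma cinner_add_left: "cinner (u + v) w = cinner u w + cinner v w"
  by (simp add: cinner_def algebra_simps sum.distrib)

lemma cinner_add_right: "cinner u (v + w) = cinner u v + cinner u w"
  by (simp add: cinner_def algebra_simps sum.distrib)

lemma cinner_diff_left: "cinner (u - v) w = cinner u w - cinner v w"
  by (simp add: cinner_def algebra_simps sum_subtractf)

lemma cinner_scale_left: "cinner (c *s v) w = c * cinner v w"
  by (simp add: cinner_def sum_distrib_left mult.assoc)

lemma cinner_scale_right: "cinner v (c *s w) = cnj c * cinner v w"
  by (simp add: cinner_def sum_distrib_left mult_ac)

lemma cinner_sum_left: "cinner (sum f S) w = (\<Sum>x\<in>S. cinner (f x) w)"
  unfolding cinner_def by (simp add: sum_distrib_right) (rule sum.swap)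

lemma cinner_commute: "cinner w v = cnj (cinner v w)"
  by (simp add: cinner_def mult.commute)

lemma norm_vec_power2: "(norm (v::complex^'n))\<^sup>2 = (\<Sum>i\<in>UNIV. (cmod (v $ i))\<^sup>2)"
  unfolding norm_vec_def L2_set_def by (simp add: sum_nonneg)

lemma cinner_self: "cinner v v = of_real ((norm v)\<^sup>2)"
  unfolding norm_vec_power2 cinner_def of_real_sum
  by (rule sum.cong) (simp_all add: complex_mult_cnj cmod_power2)

lemma cinner_self_eq_0: "cinner v v = 0 \<longleftrightarrow> v = 0"
  by (simp add: cinner_self)

lemma Re_cinner: "Re (cinner v w) = inner v w"
  by (simp add: cinner_def inner_vec_def inner_complex_def)

lemma norm_scale: "norm (c *s (v::complex^'n)) = cmod c * norm v"
proof -
  have "(norm (c *s v))\<^sup>2 = (cmod c * norm v)\<^sup>2"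
    unfolding norm_vec_power2 power_mult_distrib
    by (simp add: norm_mult power_mult_distrib sum_distrib_left)
  then show ?thesis by (simp add: power2_eq_iff_nonneg)
qed

lemma norm_cinner_le: "cmod (cinner v w) \<le> norm v * norm w"
proof (cases "cinner v w = 0")
  case False
  define c where "c = cinner v w"
  define u where "u = (cnj c / of_real (cmod c)) *s v"
  have "cinner u w = of_real (cmod c)"
    using False by (simp add: u_def c_def cinner_scale_left field_simps
        complex_norm_square[symmetric] power2_eq_square)
  then have "cmod c = inner u w" by (metis Re_cinner Re_complex_of_real)
  also have "\<dots> \<le> norm u * norm w" by (rule norm_cauchy_schwarz)
  also have "norm u = norm v" using False by (simp add: u_def c_def norm_scale norm_divide)
  finally show ?thesis by (simp add: c_def)
qed simp

lemma matrix_vector_mult_scale: "A *v (c *s v) = c *s (A *v (v::complex^'n))"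
  by (simp add: matrix_vector_mult_def vec_eq_iff sum_distrib_left mult_ac)

lemma matrix_vector_mult_sum: "A *v sum f S = (\<Sum>x\<in>S. A *v f x :: complex^'n)"
  by (induct S rule: infinite_finite_induct) (simp_all add: matrix_vector_right_distrib)

lemma mat_matrix_vector_mult: "mat c *v v = c *s (v::complex^'n)"
  by (simp add: matrix_vector_mult_def vec_eq_iff mat_def if_distrib if_distribR cong: if_cong)

lemma mat_eqI: "(\<And>v. A *v v = B *v (v::complex^'n)) \<Longrightarrow> A = B"
  by (subst matrix_eq) simp

lemma cadj_cadj [simp]: "cadj (cadj A) = A"
  by (simp add: cadj_def vec_eq_iff)

lemma cadj_mult: "cadj (A ** B) = cadj B ** cadj A"
  by (simp add: cadj_def vec_eq_iff matrix_matrix_mult_def mult.commute)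

lemma cadj_mat: "cadj (mat c) = mat (cnj c)"
  by (simp add: cadj_def vec_eq_iff mat_def)

lemma cadj_diff: "cadj (A - B) = cadj A - cadj B"
  by (simp add: cadj_def vec_eq_iff)

lemma cinner_cadj: "cinner (A *v v) w = cinner v (cadj A *v w)"
  unfolding cinner_def matrix_vector_mult_def cadj_def
  by (simp add: sum_distrib_left sum_distrib_right mult_ac) (rule sum.swap)

lemma cinner_cadj_right: "cinner v (A *v w) = cinner (cadj A *v v) w"
  by (simp add: cinner_cadj)

lemma hermitian_cinner_swap: "cadj A = A \<Longrightarrow> cinner (A *v w) v = cinner w (A *v v)"
  by (metis cinner_cadj)

lemma cinner_basis_vec: "cinner (A *v basis_vec j) (basis_vec i) = A $ i $ j"
  by (simp add: cinner_def basis_vec_def matrix_vector_mult_def if_distrib if_distribR cong: if_cong)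

lemma row_norm_power2: "of_real (\<Sum>k\<in>UNIV. (cmod (M $ x $ k))\<^sup>2) = (M ** cadj M) $ x $ x"
  unfolding matrix_matrix_mult_def cadj_def of_real_sum vec_lambda_beta
  by (rule sum.cong[OF refl]) (rule complex_norm_square)

lemma column_norm_power2: "of_real (\<Sum>k\<in>UNIV. (cmod (M $ k $ y))\<^sup>2) = (cadj M ** M) $ y $ y"
  unfolding matrix_matrix_mult_def cadj_def of_real_sum vec_lambda_beta
  by (rule sum.cong[OF refl]) (metis complex_norm_square mult.commute)

lemma norm_matrix_vector_mult_le: "norm (M *v v) \<le> opnorm M * norm (v::complex^'n::finite)"
  unfolding opnorm_def by (rule onorm[OF matrix_vector_mul_bounded_linear])

lemma opnorm_nonneg: "0 \<le> opnorm (M::complex^'n::finite^'n)"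
  unfolding opnorm_def by (rule onorm_pos_le[OF matrix_vector_mul_bounded_linear])

lemma opnorm_bound:
  "0 \<le> c \<Longrightarrow> (\<And>v. norm (M *v v) \<le> c * norm v) \<Longrightarrow> opnorm (M::complex^'n::finite^'n) \<le> c"
  unfolding opnorm_def by (rule onorm_bound)

lemma norm_cinner_le_opnorm: "cmod (cinner (S *v u) w) \<le> opnorm S * norm u * norm w"
proof -
  have "cmod (cinner (S *v u) w) \<le> norm (S *v u) * norm w" by (rule norm_cinner_le)
  also have "\<dots> \<le> opnorm S * norm u * norm w"
    by (intro mult_right_mono norm_matrix_vector_mult_le) simp
  finally show ?thesis .
qed

lemma opnorm_le_cinner_bound:
  fixes S :: "complex^'n::finite^'n"
  assumes "0 \<le> c" and bound: "\<And>u w. cmod (cinner (S *v u) w) \<le> c * norm u * norm w"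
  shows "opnorm S \<le> c"
proof (rule opnorm_bound[OF \<open>0 \<le> c\<close>])
  fix u
  have "(norm (S *v u))\<^sup>2 \<le> (c * norm u) * norm (S *v u)"
    using bound[of u "S *v u"] by (simp add: cinner_self norm_power)
  then show "norm (S *v u) \<le> c * norm u"
    by (cases "S *v u = 0") (simp_all add: power2_eq_square \<open>0 \<le> c\<close>)
qed

section \<open>The spectral theorem for Hermitian matrices\<close>

definition rayleigh :: "complex^'n::finite^'n \<Rightarrow> complex^'n \<Rightarrow> real" where
  "rayleigh A v = Re (cinner (A *v v) v)"

lemma rayleigh_cadj_mult: "rayleigh (cadj T ** T) v = (norm (T *v v))\<^sup>2"
proof -
  have "cinner ((cadj T ** T) *v v) v = cinner (T *v v) (T *v v)"
    by (simp add: cinner_cadj flip: matrix_vector_mul_assoc)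
  then show ?thesis by (simp add: rayleigh_def cinner_self)
qed

lemma hermitian_cinner_eq_0:
  fixes M :: "complex^'n::finite^'n"
  assumes herm: "cadj M = M"
    and nonneg: "\<And>s. 0 \<le> rayleigh M (v + s *s w)"
    and zero: "rayleigh M v = 0"
  shows "cinner (M *v v) w = 0"
proof -
  define c where "c = cinner (M *v v) w"
  define \<beta> where "\<beta> = rayleigh M w"
  define r :: real where "r = 1 / (\<bar>\<beta>\<bar> + 1)"
  have r0: "r > 0" by (simp add: r_def add_pos_nonneg)
  have "r * \<beta> \<le> r * \<bar>\<beta>\<bar>" using r0 by (intro mult_left_mono) simp_all
  also have "\<dots> < 2" by (simp add: r_def field_simps)
  finally have r\<beta>: "r * \<beta> < 2" .
  define s where "s = - (of_real r * c)"
  have wv: "cinner (M *v w) v = cnj c"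
    using hermitian_cinner_swap[OF herm, of w v] cinner_commute c_def by metis
  have cm: "cmod c * cmod c = Re c * Re c + Im c * Im c"
    by (metis cmod_power2 power2_eq_square)
  have "rayleigh M (v + s *s w)
      = Re (cinner (M *v v) v + cnj s * c + s * cnj c + s * cnj s * cinner (M *v w) w)"
    unfolding rayleigh_def
    by (simp add: matrix_vector_right_distrib matrix_vector_mult_scale cinner_add_left
        cinner_add_right cinner_scale_left cinner_scale_right wv c_def algebra_simps)
  also have "\<dots> = r * (cmod c)\<^sup>2 * (r * \<beta> - 2)"
    using zero cm unfolding rayleigh_def \<beta>_def s_def by (simp add: algebra_simps power2_eq_square)
  finally have "rayleigh M (v + s *s w) = r * (cmod c)\<^sup>2 * (r * \<beta> - 2)" .
  then have "0 \<le> r * (cmod c)\<^sup>2 * (r * \<beta> - 2)" using nonneg by metis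
  then have "r * (cmod c)\<^sup>2 \<le> 0" using r\<beta> by (simp add: zero_le_mult_iff)
  then show ?thesis using r0 by (simp add: c_def mult_le_0_iff)
qed

lemma rayleigh_scale: "rayleigh A (c *s v) = (cmod c)\<^sup>2 * rayleigh A v"
proof -
  have "cinner (A *v (c *s v)) (c *s v) = (c * cnj c) * cinner (A *v v) v"
    by (simp add: matrix_vector_mult_scale cinner_scale_left cinner_scale_right mult_ac)
  then show ?thesis by (simp add: rayleigh_def complex_mult_cnj cmod_power2)
qed

lemma continuous_on_rayleigh: "continuous_on UNIV (rayleigh A)"
  unfolding rayleigh_def cinner_def matrix_vector_mult_def by (intro continuous_intros)

text \<open>If \<open>v\<close> maximises the Rayleigh quotient on \<open>S\<close>, then \<open>M = \<mu> - A\<close> is nonnegative on \<open>S\<close> and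
  vanishes at \<open>v\<close>, so \<open>M v \<in> S\<close> is orthogonal to itself.\<close>

lemma rayleigh_maximiser_eigenvector:
  fixes A :: "complex^'n::finite^'n"
  assumes herm: "cadj A = A"
    and add: "\<And>x y. x \<in> S \<Longrightarrow> y \<in> S \<Longrightarrow> x + y \<in> S"
    and scale: "\<And>c x. x \<in> S \<Longrightarrow> c *s x \<in> S"
    and invariant: "\<And>x. x \<in> S \<Longrightarrow> A *v x \<in> S"
    and "v \<in> S" "norm v = 1"
    and max: "\<And>z. z \<in> S \<Longrightarrow> rayleigh A z \<le> rayleigh A v * (norm z)\<^sup>2"
  shows "A *v v = of_real (rayleigh A v) *s v"
proof -
  define \<mu> where "\<mu> = rayleigh A v"
  define M where "M = mat (of_real \<mu>) - A"
  have "cadj M = M" by (simp add: M_def cadj_diff cadj_mat herm)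
  have rayleigh_M: "rayleigh M z = \<mu> * (norm z)\<^sup>2 - rayleigh A z" for z
    by (simp add: M_def rayleigh_def matrix_vector_mult_diff_rdistrib mat_matrix_vector_mult
        cinner_diff_left cinner_scale_left cinner_self)
  have "M *v v = of_real \<mu> *s v + (-1) *s (A *v v)"
    by (simp add: M_def matrix_vector_mult_diff_rdistrib mat_matrix_vector_mult vec_eq_iff)
  then have "M *v v \<in> S" using \<open>v \<in> S\<close> by (simp only:) (intro add scale invariant)
  have "cinner (M *v v) (M *v v) = 0"
  proof (rule hermitian_cinner_eq_0[OF \<open>cadj M = M\<close>])
    show "0 \<le> rayleigh M (v + s *s (M *v v))" for s
      using max add scale \<open>v \<in> S\<close> \<open>M *v v \<in> S\<close> by (simp add: rayleigh_M \<mu>_def)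
    show "rayleigh M v = 0" by (simp add: rayleigh_M \<open>norm v = 1\<close> \<mu>_def)
  qed
  then show ?thesis
    by (simp add: cinner_self_eq_0 M_def matrix_vector_mult_diff_rdistrib mat_matrix_vector_mult \<mu>_def)
qed

lemma hermitian_eigenvector_in_subspace:
  fixes A :: "complex^'n::finite^'n"
  assumes herm: "cadj A = A"
    and add: "\<And>x y. x \<in> S \<Longrightarrow> y \<in> S \<Longrightarrow> x + y \<in> S"
    and scale: "\<And>c x. x \<in> S \<Longrightarrow> c *s x \<in> S"
    and "closed S" and invariant: "\<And>x. x \<in> S \<Longrightarrow> A *v x \<in> S"
    and "w \<in> S" "w \<noteq> 0"
  obtains e where "e \<in> S" "norm e = 1" "A *v e = of_real (rayleigh A e) *s e"
proof -
  define K where "K = S \<inter> sphere 0 1"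
  have "compact K" unfolding K_def using \<open>closed S\<close> by (intro closed_Int_compact compact_sphere)
  moreover have "of_real (1 / norm w) *s w \<in> K"
    using \<open>w \<in> S\<close> \<open>w \<noteq> 0\<close> by (simp add: K_def scale norm_scale norm_divide)
  then have "K \<noteq> {}" by auto
  moreover have "continuous_on K (rayleigh A)"
    using continuous_on_rayleigh by (rule continuous_on_subset) simp
  ultimately obtain v where "v \<in> K" and max: "\<And>z. z \<in> K \<Longrightarrow> rayleigh A z \<le> rayleigh A v"
    using continuous_attains_sup[of K "rayleigh A"] by blast
  have "v \<in> S" "norm v = 1" using \<open>v \<in> K\<close> by (auto simp: K_def)
  moreover have "rayleigh A z \<le> rayleigh A v * (norm z)\<^sup>2" if "z \<in> S" for z
  proof (cases "z = 0")
    case False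
    define u where "u = of_real (1 / norm z) *s z"
    have "u \<in> K" using \<open>z \<in> S\<close> False by (simp add: K_def u_def scale norm_scale norm_divide)
    then have "rayleigh A u \<le> rayleigh A v" by (rule max)
    moreover have "rayleigh A u = rayleigh A z / (norm z)\<^sup>2"
      by (simp add: u_def rayleigh_scale norm_divide field_simps)
    ultimately show ?thesis using False by (simp add: divide_le_eq)
  qed (simp add: rayleigh_def cinner_self)
  ultimately show ?thesis
    using rayleigh_maximiser_eigenvector[OF herm add scale invariant] that by blast
qed

definition orthonormal_eigenvectors :: "complex^'n::finite^'n \<Rightarrow> (complex^'n) set \<Rightarrow> bool" where
  "orthonormal_eigenvectors A B \<longleftrightarrow>
     (\<forall>b\<in>B. norm b = 1 \<and> A *v b = of_real (rayleigh A b) *s b) \<and>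
     (\<forall>b\<in>B. \<forall>c\<in>B. b \<noteq> c \<longrightarrow> cinner b c = 0)"

lemma orthonormal_eigenvectors_card_le:
  fixes A :: "complex^'n::finite^'n"
  assumes "orthonormal_eigenvectors A B"
  shows "finite B" "card B \<le> DIM(complex^'n)"
proof -
  have "pairwise orthogonal B"
    using assms unfolding orthonormal_eigenvectors_def pairwise_def orthogonal_def
    by (metis Re_cinner zero_complex.simps(1))
  moreover have "0 \<notin> B" using assms unfolding orthonormal_eigenvectors_def by force
  ultimately have "independent B" by (rule pairwise_orthogonal_independent)
  then show "finite B" "card B \<le> DIM(complex^'n)" using independent_bound[of B] by simp_all
qed

lemma orthonormal_eigenvectors_cinner:
  "orthonormal_eigenvectors A B \<Longrightarrow> b \<in> B \<Longrightarrow> c \<in> B \<Longrightarrow> cinner b c = (if b = c then 1 else 0)"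
  unfolding orthonormal_eigenvectors_def by (auto simp: cinner_self)

definition cperp :: "(complex^'n::finite) set \<Rightarrow> (complex^'n) set" where
  "cperp B = {z. \<forall>b\<in>B. cinner z b = 0}"

lemma cperp_add: "x \<in> cperp B \<Longrightarrow> y \<in> cperp B \<Longrightarrow> x + y \<in> cperp B"
  by (simp add: cperp_def cinner_add_left)

lemma cperp_scale: "x \<in> cperp B \<Longrightarrow> c *s x \<in> cperp B"
  by (simp add: cperp_def cinner_scale_left)

lemma closed_cperp: "closed (cperp B)"
proof -
  have "closed {z. cinner z b = 0}" for b :: "complex^'n"
    unfolding cinner_def by (intro closed_Collect_eq continuous_intros)
  then show ?thesis unfolding cperp_def Collect_ball_eq by (intro closed_INT) blast
qed

lemma hermitian_cperp_invariant:
  assumes "cadj A = A" "orthonormal_eigenvectors A B" "x \<in> cperp B"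
  shows "A *v x \<in> cperp B"
proof -
  have "cinner (A *v x) b = 0" if "b \<in> B" for b
  proof -
    have "cinner (A *v x) b = cinner x (A *v b)" by (rule hermitian_cinner_swap[OF assms(1)])
    also have "A *v b = of_real (rayleigh A b) *s b"
      using assms(2) \<open>b \<in> B\<close> by (simp add: orthonormal_eigenvectors_def)
    finally show ?thesis using assms(3) \<open>b \<in> B\<close> by (simp add: cperp_def cinner_scale_right)
  qed
  then show ?thesis by (simp add: cperp_def)
qed

lemma residual_in_cperp:
  assumes "orthonormal_eigenvectors A B"
  shows "v - (\<Sum>b\<in>B. cinner v b *s b) \<in> cperp B"
proof -
  have "(\<Sum>b\<in>B. cinner (cinner v b *s b) c) = cinner v c" if "c \<in> B" for c
  proof -
    have "(\<Sum>b\<in>B. cinner (cinner v b *s b) c) = (\<Sum>b\<in>B. if b = c then cinner v c else 0)"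
      by (rule sum.cong)
        (auto simp: cinner_scale_left orthonormal_eigenvectors_cinner[OF assms _ that])
    then show ?thesis using orthonormal_eigenvectors_card_le(1)[OF assms] that by simp
  qed
  then show ?thesis by (simp add: cperp_def cinner_diff_left cinner_sum_left)
qed

lemma orthonormal_eigenvectors_insert:
  fixes A :: "complex^'n::finite^'n"
  assumes herm: "cadj A = A" and B: "orthonormal_eigenvectors A B"
    and incomplete: "v \<noteq> (\<Sum>b\<in>B. cinner v b *s b)"
  obtains e where "e \<notin> B" "orthonormal_eigenvectors A (insert e B)"
proof -
  obtain e where "e \<in> cperp B" "norm e = 1" "A *v e = of_real (rayleigh A e) *s e"
  proof (rule hermitian_eigenvector_in_subspace[OF herm cperp_add cperp_scale closed_cperp])
    show "A *v x \<in> cperp B" if "x \<in> cperp B" for x by (rule hermitian_cperp_invariant[OF herm B that])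
    show "v - (\<Sum>b\<in>B. cinner v b *s b) \<in> cperp B" by (rule residual_in_cperp[OF B])
    show "v - (\<Sum>b\<in>B. cinner v b *s b) \<noteq> 0" using incomplete by simp
  qed
  have "e \<notin> B" using \<open>e \<in> cperp B\<close> \<open>norm e = 1\<close> by (auto simp: cperp_def cinner_self_eq_0)
  moreover have "cinner b e = 0" if "b \<in> B" for b
    using \<open>e \<in> cperp B\<close> that cinner_commute[of b e] by (simp add: cperp_def)
  then have "orthonormal_eigenvectors A (insert e B)"
    using B \<open>e \<in> cperp B\<close> \<open>norm e = 1\<close> \<open>A *v e = _\<close>
    by (auto simp: orthonormal_eigenvectors_def cperp_def)
  ultimately show ?thesis by (rule that)
qed

locale eigenbasis =
  fixes A :: "complex^'n::finite^'n" and B :: "(complex^'n) set"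
  assumes hermitian: "cadj A = A"
    and orthonormal: "orthonormal_eigenvectors A B"
    and expansion: "\<And>v. v = (\<Sum>b\<in>B. cinner v b *s b)"

lemma hermitian_eigenbasis:
  fixes A :: "complex^'n::finite^'n"
  assumes "cadj A = A"
  obtains B where "eigenbasis A B"
proof -
  obtain B where B: "orthonormal_eigenvectors A B"
    and max: "\<And>B'. orthonormal_eigenvectors A B' \<Longrightarrow> card B' \<le> card B"
  proof -
    have "orthonormal_eigenvectors A {}" by (simp add: orthonormal_eigenvectors_def)
    moreover have "\<forall>B'. orthonormal_eigenvectors A B' \<longrightarrow> card B' < Suc DIM(complex^'n)"
      using orthonormal_eigenvectors_card_le(2)[of A] by (simp add: less_Suc_eq_le)
    ultimately show ?thesis
      using that Lattices_Big.ex_has_greatest_nat[of "orthonormal_eigenvectors A" "{}" card] by blast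
  qed
  have "v = (\<Sum>b\<in>B. cinner v b *s b)" for v
  proof (rule ccontr)
    assume "v \<noteq> (\<Sum>b\<in>B. cinner v b *s b)"
    then obtain e where "e \<notin> B" "orthonormal_eigenvectors A (insert e B)"
      by (rule orthonormal_eigenvectors_insert[OF assms B])
    then show False
      using max[of "insert e B"] orthonormal_eigenvectors_card_le(1)[OF B] by simp
  qed
  with assms B have "eigenbasis A B" by (rule eigenbasis.intro)
  then show ?thesis by (rule that)
qed

section \<open>Functional calculus\<close>

definition matfun :: "complex^'n::finite^'n \<Rightarrow> (complex^'n) set \<Rightarrow> (real \<Rightarrow> real) \<Rightarrow> complex^'n^'n"
  where "matfun A B f = (\<chi> i j. \<Sum>b\<in>B. of_real (f (rayleigh A b)) * b $ i * cnj (b $ j))"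

context eigenbasis
begin

lemma finite_basis: "finite B"
  using orthonormal_eigenvectors_card_le(1)[OF orthonormal] .

lemma cinner_basis: "b \<in> B \<Longrightarrow> c \<in> B \<Longrightarrow> cinner b c = (if b = c then 1 else 0)"
  using orthonormal_eigenvectors_cinner[OF orthonormal] .

lemma eigenvector: "b \<in> B \<Longrightarrow> A *v b = of_real (rayleigh A b) *s b"
  using orthonormal unfolding orthonormal_eigenvectors_def by blast

lemma matfun_mult_vec:
  "matfun A B f *v v = (\<Sum>b\<in>B. (of_real (f (rayleigh A b)) * cinner v b) *s b)"
  unfolding matfun_def matrix_vector_mult_def cinner_def
  by (simp add: vec_eq_iff sum_distrib_right) (subst sum.swap, simp add: sum_distrib_left mult_ac)

lemma matfun_eigenvector: "b \<in> B \<Longrightarrow> matfun A B f *v b = of_real (f (rayleigh A b)) *s b"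
proof -
  assume "b \<in> B"
  have "matfun A B f *v b = (\<Sum>c\<in>B. if c = b then of_real (f (rayleigh A b)) *s b else 0)"
    unfolding matfun_mult_vec by (rule sum.cong) (auto simp: cinner_basis[OF \<open>b \<in> B\<close>])
  also have "\<dots> = of_real (f (rayleigh A b)) *s b" using finite_basis \<open>b \<in> B\<close> by simp
  finally show ?thesis .
qed

lemma matfun_mult: "matfun A B f ** matfun A B g = matfun A B (\<lambda>x. f x * g x)"
proof (rule mat_eqI)
  fix v
  have "(matfun A B f ** matfun A B g) *v v
      = (\<Sum>b\<in>B. (of_real (g (rayleigh A b)) * cinner v b) *s (matfun A B f *v b))"
    by (simp add: matfun_mult_vec[of g] matrix_vector_mult_sum matrix_vector_mult_scale
        flip: matrix_vector_mul_assoc)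
  also have "\<dots> = (\<Sum>b\<in>B. (of_real (f (rayleigh A b) * g (rayleigh A b)) * cinner v b) *s b)"
    by (rule sum.cong) (simp_all add: matfun_eigenvector vector_smult_assoc mult_ac)
  also have "\<dots> = matfun A B (\<lambda>x. f x * g x) *v v" by (simp add: matfun_mult_vec)
  finally show "(matfun A B f ** matfun A B g) *v v = matfun A B (\<lambda>x. f x * g x) *v v" .
qed

lemma matfun_id: "matfun A B (\<lambda>x. x) = A"
proof (rule mat_eqI)
  fix v
  have "A *v v = A *v (\<Sum>b\<in>B. cinner v b *s b)" using expansion by metis
  also have "\<dots> = matfun A B (\<lambda>x. x) *v v"
    unfolding matfun_mult_vec
    by (simp add: matrix_vector_mult_sum matrix_vector_mult_scale eigenvector vector_smult_assoc
        mult.commute)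
  finally show "matfun A B (\<lambda>x. x) *v v = A *v v" by simp
qed

lemma matfun_one: "matfun A B (\<lambda>_. 1) = mat 1"
proof (rule mat_eqI)
  show "matfun A B (\<lambda>_. 1) *v v = mat 1 *v v" for v
    unfolding matfun_mult_vec using expansion[of v] by simp
qed

lemma matfun_cong:
  "(\<And>b. b \<in> B \<Longrightarrow> f (rayleigh A b) = g (rayleigh A b)) \<Longrightarrow> matfun A B f = matfun A B g"
  unfolding matfun_def by (simp add: vec_eq_iff)

lemma cadj_matfun: "cadj (matfun A B f) = matfun A B f"
  unfolding matfun_def cadj_def by (simp add: vec_eq_iff mult_ac)

lemma cinner_matfun:
  "cinner (matfun A B f *v v) v = of_real (\<Sum>b\<in>B. f (rayleigh A b) * (cmod (cinner v b))\<^sup>2)"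
proof -
  have "cinner (matfun A B f *v v) v = (\<Sum>b\<in>B. of_real (f (rayleigh A b)) * (cinner v b * cinner b v))"
    unfolding matfun_mult_vec cinner_sum_left by (simp add: cinner_scale_left mult.assoc)
  also have "\<dots> = of_real (\<Sum>b\<in>B. f (rayleigh A b) * (cmod (cinner v b))\<^sup>2)"
  proof -
    have "cinner v b * cinner b v = of_real ((cmod (cinner v b))\<^sup>2)" for b
      using complex_norm_square[of "cinner v b"] cinner_commute[of b v] by simp
    then show ?thesis by simp
  qed
  finally show ?thesis .
qed

lemma rayleigh_matfun:
  "rayleigh (matfun A B f) v = (\<Sum>b\<in>B. f (rayleigh A b) * (cmod (cinner v b))\<^sup>2)"
  by (simp add: rayleigh_def cinner_matfun)

lemma norm_power2_eq_sum_basis: "(norm v)\<^sup>2 = (\<Sum>b\<in>B. (cmod (cinner v b))\<^sup>2)"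
  using cinner_matfun[of "\<lambda>_. 1" v]
  by (simp only: matfun_one matrix_vector_mul_lid cinner_self mult_1 of_real_eq_iff)

lemma psd_matfun: "(\<And>b. b \<in> B \<Longrightarrow> 0 \<le> f (rayleigh A b)) \<Longrightarrow> psd (matfun A B f)"
  unfolding psd_def by (simp add: cadj_matfun cinner_matfun sum_nonneg)

lemma matfun_eigenspace:
  assumes "A *v u = of_real \<mu> *s u"
  shows "matfun A B f *v u = of_real (f \<mu>) *s u"
proof -
  have "cinner u b = 0" if "b \<in> B" "rayleigh A b \<noteq> \<mu>" for b
  proof -
    have "(of_real \<mu> - of_real (rayleigh A b)) * cinner u b = 0"
      using hermitian_cinner_swap[OF hermitian, of u b] assms eigenvector[OF that(1)]
      by (simp add: cinner_scale_left cinner_scale_right algebra_simps)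
    then show ?thesis using that(2) by simp
  qed
  then have "(of_real (f (rayleigh A b)) * cinner u b) *s b = of_real (f \<mu>) *s (cinner u b *s b)"
    if "b \<in> B" for b
    using that by (cases "rayleigh A b = \<mu>") (simp_all add: vector_smult_assoc)
  then have "matfun A B f *v u = (\<Sum>b\<in>B. of_real (f \<mu>) *s (cinner u b *s b))"
    unfolding matfun_mult_vec by (rule sum.cong[OF refl])
  also have "\<dots> = of_real (f \<mu>) *s (\<Sum>b\<in>B. cinner u b *s b)"
    by (simp add: vec_eq_iff sum_distrib_left mult.assoc)
  finally show ?thesis by (simp flip: expansion)
qed

lemma matfun_commute:
  assumes "M ** A = A ** M"
  shows "M ** matfun A B f = matfun A B f ** M"
proof (rule mat_eqI)
  fix v
  have "M *v (matfun A B f *v b) = matfun A B f *v (M *v b)" if "b \<in> B" for b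
  proof -
    have Mb: "A *v (M *v b) = of_real (rayleigh A b) *s (M *v b)"
      by (simp add: matrix_vector_mul_assoc flip: assms)
        (simp add: eigenvector[OF that] matrix_vector_mult_scale flip: matrix_vector_mul_assoc)
    show ?thesis
      by (simp add: matfun_eigenspace[OF Mb] matfun_eigenvector[OF that] matrix_vector_mult_scale)
  qed
  then have "M *v (matfun A B f *v (\<Sum>b\<in>B. cinner v b *s b))
      = matfun A B f *v (M *v (\<Sum>b\<in>B. cinner v b *s b))"
    by (simp add: matrix_vector_mult_sum matrix_vector_mult_scale)
  then show "(M ** matfun A B f) *v v = (matfun A B f ** M) *v v"
    by (simp add: matrix_vector_mul_assoc flip: expansion)
qed

lemma matfun_in_commutant:
  assumes "A \<in> commutant S"
  shows "matfun A B f \<in> commutant S"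
  unfolding commutant_def
proof (intro CollectI ballI)
  fix U assume "U \<in> S"
  then have "U ** A = A ** U" using assms by (simp add: commutant_def)
  then show "matfun A B f ** U = U ** matfun A B f" by (simp add: matfun_commute)
qed

end

section \<open>Positive square roots and polar decomposition\<close>

text \<open>For a unit eigenvector \<open>b\<close> of \<open>P - Q\<close> with eigenvalue \<open>l\<close>, comparing
  \<open>\<parallel>P b\<parallel>\<^sup>2 = \<parallel>Q b\<parallel>\<^sup>2\<close> with \<open>P b = Q b + l b\<close> gives \<open>l (2 \<langle>Q b, b\<rangle> + l) = 0\<close>,
  while \<open>\<langle>P b, b\<rangle> = \<langle>Q b, b\<rangle> + l\<close>; positivity of both forces \<open>l = 0\<close>.\<close>

lemma psd_square_eq_eigenvalue_0:
  fixes P Q :: "complex^'n::finite^'n"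
  assumes P: "psd P" and Q: "psd Q" and square: "P ** P = Q ** Q"
    and "norm b = 1" and eigen: "(P - Q) *v b = of_real l *s b"
  shows "l = 0"
proof -
  have bb: "cinner b b = 1" using \<open>norm b = 1\<close> by (simp add: cinner_self)
  have Pb: "P *v b = Q *v b + of_real l *s b"
    using eigen by (simp add: matrix_vector_mult_diff_rdistrib algebra_simps)
  have "0 \<le> Re (cinner (Q *v b) b)" using Q by (simp add: psd_def)
  moreover have "0 \<le> Re (cinner (P *v b) b)" using P by (simp add: psd_def)
  then have "0 \<le> Re (cinner (Q *v b) b) + l" by (simp add: Pb cinner_add_left cinner_scale_left bb)
  moreover have "Re (cinner b (Q *v b)) = Re (cinner (Q *v b) b)"
    by (subst cinner_commute) simp
  then have "Re (cinner (P *v b) (P *v b))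
      = Re (cinner (Q *v b) (Q *v b)) + l * (2 * Re (cinner (Q *v b) b) + l)"
    by (simp add: Pb cinner_add_left cinner_add_right cinner_scale_left cinner_scale_right bb
        algebra_simps)
  moreover have "cinner (P *v b) (P *v b) = cinner (Q *v b) (Q *v b)"
    using P Q by (simp add: psd_def cinner_cadj_right matrix_vector_mul_assoc square)
  ultimately show "l = 0" by (auto simp: mult_eq_0_iff)
qed

lemma psd_square_root_unique:
  fixes P Q :: "complex^'n::finite^'n"
  assumes "psd P" "psd Q" "P ** P = Q ** Q"
  shows "P = Q"
proof -
  have "cadj (P - Q) = P - Q" using assms by (simp add: psd_def cadj_diff)
  then obtain B where "eigenbasis (P - Q) B" by (rule hermitian_eigenbasis)
  then interpret eigenbasis "P - Q" B .
  have "P - Q = matfun (P - Q) B (\<lambda>x. x)" by (simp add: matfun_id)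
  also have "\<dots> = matfun (P - Q) B (\<lambda>_. 0)"
  proof (rule matfun_cong)
    fix b assume "b \<in> B"
    then have "norm b = 1" using orthonormal by (simp add: orthonormal_eigenvectors_def)
    then show "rayleigh (P - Q) b = 0"
      using psd_square_eq_eigenvalue_0[OF assms] eigenvector[OF \<open>b \<in> B\<close>] by blast
  qed
  also have "\<dots> = 0" by (simp add: matfun_def vec_eq_iff)
  finally show ?thesis by simp
qed

lemma mabs_eqI: "psd P \<Longrightarrow> P ** P = cadj T ** T \<Longrightarrow> mabs T = P"
  unfolding mabs_def by (rule the_equality) (auto intro: psd_square_root_unique)

lemma inverse_sqrt_mult: "0 \<le> x \<Longrightarrow> inverse (sqrt x) * x = sqrt x"
  using real_div_sqrt[of x] by (simp add: divide_inverse mult.commute)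

lemma mult_in_commutant:
  assumes "A \<in> commutant S" "B \<in> commutant S"
  shows "A ** B \<in> commutant S"
  unfolding commutant_def
proof (intro CollectI ballI)
  fix U assume "U \<in> S"
  then have "A ** U = U ** A" "B ** U = U ** B" using assms by (auto simp: commutant_def)
  then show "A ** B ** U = U ** (A ** B)" by (metis matrix_mul_assoc)
qed

locale polar_eigenbasis = eigenbasis "cadj T ** T" B
  for T :: "complex^'n::finite^'n" and B
begin

lemma rayleigh_cadj_mult_nonneg: "0 \<le> rayleigh (cadj T ** T) v"
  by (simp add: rayleigh_cadj_mult)

lemma mabs_eq_matfun: "mabs T = matfun (cadj T ** T) B sqrt"
proof (rule mabs_eqI)
  show "psd (matfun (cadj T ** T) B sqrt)" by (rule psd_matfun) (simp add: rayleigh_cadj_mult_nonneg)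
  have "matfun (cadj T ** T) B sqrt ** matfun (cadj T ** T) B sqrt
      = matfun (cadj T ** T) B (\<lambda>x. x)"
    unfolding matfun_mult by (rule matfun_cong) (simp add: rayleigh_cadj_mult_nonneg)
  then show "matfun (cadj T ** T) B sqrt ** matfun (cadj T ** T) B sqrt = cadj T ** T"
    by (simp add: matfun_id)
qed

lemma psd_mabs: "psd (mabs T)"
  unfolding mabs_eq_matfun by (rule psd_matfun) (simp add: rayleigh_cadj_mult_nonneg)

lemma mabs_square_root:
  obtains Q where "cadj Q = Q" "Q ** Q = mabs T"
proof
  show "cadj (matfun (cadj T ** T) B (\<lambda>x. sqrt (sqrt x))) = matfun (cadj T ** T) B (\<lambda>x. sqrt (sqrt x))"
    by (rule cadj_matfun)
  show "matfun (cadj T ** T) B (\<lambda>x. sqrt (sqrt x)) ** matfun (cadj T ** T) B (\<lambda>x. sqrt (sqrt x)) = mabs T"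
    unfolding matfun_mult mabs_eq_matfun by (rule matfun_cong) (simp add: rayleigh_cadj_mult_nonneg)
qed

text \<open>Because \<open>inverse 0 = 0\<close>, the matrix function of \<open>T\<^sup>* T\<close> below is the Moore-Penrose inverse
  of \<open>|T|\<close>.\<close>

definition isometric_part :: "complex^'n^'n" where
  "isometric_part = T ** matfun (cadj T ** T) B (\<lambda>x. inverse (sqrt x))"

lemma mult_support_projection: "T ** matfun (cadj T ** T) B (\<lambda>x. if x = 0 then 0 else 1) = T"
proof (rule mat_eqI)
  fix v
  have "T *v ((of_real (if rayleigh (cadj T ** T) b = 0 then 0 else 1) * cinner v b) *s b)
      = T *v (cinner v b *s b)" if "b \<in> B" for b
    using rayleigh_cadj_mult[of T b] by (cases "T *v b = 0") (simp_all add: matrix_vector_mult_scale)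
  then have "T *v (matfun (cadj T ** T) B (\<lambda>x. if x = 0 then 0 else 1) *v v)
      = T *v (\<Sum>b\<in>B. cinner v b *s b)"
    unfolding matfun_mult_vec matrix_vector_mult_sum by (rule sum.cong[OF refl])
  then show "(T ** matfun (cadj T ** T) B (\<lambda>x. if x = 0 then 0 else 1)) *v v = T *v v"
    by (simp add: matrix_vector_mul_assoc flip: expansion)
qed

lemma polar_decomposition: "isometric_part ** mabs T = T"
proof -
  have "(\<lambda>x. inverse (sqrt x) * sqrt x) = (\<lambda>x. if x = 0 then 0 else 1)" by auto
  then show ?thesis
    using mult_support_projection
    by (simp add: isometric_part_def mabs_eq_matfun matfun_mult flip: matrix_mul_assoc)
qed

lemma cadj_isometric_part_mult: "cadj isometric_part ** T = mabs T"
proof -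
  have "cadj isometric_part ** T = matfun (cadj T ** T) B (\<lambda>x. inverse (sqrt x)) ** (cadj T ** T)"
    by (simp add: isometric_part_def cadj_mult cadj_matfun matrix_mul_assoc)
  also have "\<dots> = matfun (cadj T ** T) B sqrt"
    by (subst (2) matfun_id[symmetric], unfold matfun_mult, rule matfun_cong)
      (simp add: inverse_sqrt_mult rayleigh_cadj_mult_nonneg)
  finally show ?thesis by (simp add: mabs_eq_matfun)
qed

lemma cadj_isometric_part_mult_self:
  "cadj isometric_part ** isometric_part = matfun (cadj T ** T) B (\<lambda>x. if x = 0 then 0 else 1)"
proof -
  have "cadj isometric_part ** isometric_part
      = matfun (cadj T ** T) B (\<lambda>x. inverse (sqrt x)) ** (cadj T ** T)
        ** matfun (cadj T ** T) B (\<lambda>x. inverse (sqrt x))"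
    by (simp add: isometric_part_def cadj_mult cadj_matfun matrix_mul_assoc)
  also have "\<dots> = matfun (cadj T ** T) B (\<lambda>x. if x = 0 then 0 else 1)"
    by (subst (2) matfun_id[symmetric], unfold matfun_mult, rule matfun_cong)
      (simp add: inverse_sqrt_mult rayleigh_cadj_mult_nonneg)
  finally show ?thesis .
qed

lemma opnorm_isometric_part_le: "opnorm isometric_part \<le> 1"
proof (rule opnorm_bound)
  fix v
  have "(norm (isometric_part *v v))\<^sup>2
      = (\<Sum>b\<in>B. (if rayleigh (cadj T ** T) b = 0 then 0 else 1) * (cmod (cinner v b))\<^sup>2)"
    by (simp only: rayleigh_cadj_mult[symmetric] cadj_isometric_part_mult_self rayleigh_matfun)
  also have "\<dots> \<le> (norm v)\<^sup>2"
    unfolding norm_power2_eq_sum_basis by (intro sum_mono) simp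
  finally have "norm (isometric_part *v v) \<le> norm v" by (rule power2_le_imp_le) simp
  then show "norm (isometric_part *v v) \<le> 1 * norm v" by simp
qed simp

lemma matfun_in_commutant_polar:
  "T \<in> commutant S \<Longrightarrow> cadj T \<in> commutant S \<Longrightarrow> matfun (cadj T ** T) B f \<in> commutant S"
  by (intro matfun_in_commutant mult_in_commutant)

end

section \<open>Schur multipliers\<close>

text \<open>For \<open>T = A' B'\<close> one has \<open>S\<^sub>T R = \<Sum>\<^sub>k D\<^sub>k R E\<^sub>k\<close>, where \<open>D\<^sub>k\<close> and \<open>E\<^sub>k\<close> are the diagonal
  matrices formed from column \<open>k\<close> of \<open>A'\<close> and row \<open>k\<close> of \<open>B'\<close>.\<close>

lemma cinner_schur_mult:
  fixes A' B' R :: "complex^'n::finite^'n"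
  shows "cinner (schur (A' ** B') R *v u) w
    = (\<Sum>k\<in>UNIV. cinner (R *v (\<chi> y. B' $ k $ y * u $ y)) (\<chi> x. cnj (A' $ x $ k) * w $ x))"
proof -
  have "cinner (schur (A' ** B') R *v u) w
      = (\<Sum>x\<in>UNIV. \<Sum>y\<in>UNIV. \<Sum>k\<in>UNIV. A' $ x $ k * B' $ k $ y * R $ x $ y * u $ y * cnj (w $ x))"
    by (simp add: schur_def cinner_def matrix_vector_mult_def matrix_matrix_mult_def
        sum_distrib_left sum_distrib_right mult_ac)
  also have "\<dots> = (\<Sum>x\<in>UNIV. \<Sum>k\<in>UNIV. \<Sum>y\<in>UNIV. A' $ x $ k * B' $ k $ y * R $ x $ y * u $ y * cnj (w $ x))"
    by (rule sum.cong[OF refl]) (rule sum.swap)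
  also have "\<dots> = (\<Sum>k\<in>UNIV. \<Sum>x\<in>UNIV. \<Sum>y\<in>UNIV. A' $ x $ k * B' $ k $ y * R $ x $ y * u $ y * cnj (w $ x))"
    by (rule sum.swap)
  also have "\<dots> = (\<Sum>k\<in>UNIV. cinner (R *v (\<chi> y. B' $ k $ y * u $ y)) (\<chi> x. cnj (A' $ x $ k) * w $ x))"
    by (simp add: cinner_def matrix_vector_mult_def sum_distrib_left sum_distrib_right mult_ac)
  finally show ?thesis .
qed

lemma sum_norm_power2_weighted_le:
  fixes M :: "'k::finite \<Rightarrow> 'n::finite \<Rightarrow> complex"
  assumes "\<And>y. (\<Sum>k\<in>UNIV. (cmod (M k y))\<^sup>2) \<le> a"
  shows "(\<Sum>k\<in>UNIV. (norm (\<chi> y. M k y * u $ y))\<^sup>2) \<le> a * (norm u)\<^sup>2"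
proof -
  have "(\<Sum>k\<in>UNIV. (norm (\<chi> y. M k y * u $ y))\<^sup>2)
      = (\<Sum>y\<in>UNIV. (\<Sum>k\<in>UNIV. (cmod (M k y))\<^sup>2) * (cmod (u $ y))\<^sup>2)"
    by (simp add: norm_vec_power2 norm_mult power_mult_distrib sum_distrib_right) (rule sum.swap)
  also have "\<dots> \<le> (\<Sum>y\<in>UNIV. a * (cmod (u $ y))\<^sup>2)"
    by (intro sum_mono mult_right_mono assms) simp
  also have "\<dots> = a * (norm u)\<^sup>2" by (simp add: norm_vec_power2 sum_distrib_left)
  finally show ?thesis .
qed

lemma opnorm_schur_mult_le:
  fixes A' B' R :: "complex^'n::finite^'n"
  assumes "0 \<le> a"
    and rows: "\<And>x. (\<Sum>k\<in>UNIV. (cmod (A' $ x $ k))\<^sup>2) \<le> a"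
    and columns: "\<And>y. (\<Sum>k\<in>UNIV. (cmod (B' $ k $ y))\<^sup>2) \<le> a"
  shows "opnorm (schur (A' ** B') R) \<le> a * opnorm R"
proof (rule opnorm_le_cinner_bound)
  show "0 \<le> a * opnorm R" using \<open>0 \<le> a\<close> by (simp add: opnorm_nonneg)
  fix u w :: "complex^'n"
  define f where "f k = norm (\<chi> y. B' $ k $ y * u $ y)" for k
  define g where "g k = norm (\<chi> x. cnj (A' $ x $ k) * w $ x)" for k
  have f: "L2_set f UNIV \<le> sqrt (a * (norm u)\<^sup>2)"
    unfolding L2_set_def f_def by (intro real_sqrt_le_mono sum_norm_power2_weighted_le columns)
  have g: "L2_set g UNIV \<le> sqrt (a * (norm w)\<^sup>2)"
    unfolding L2_set_def g_def by (intro real_sqrt_le_mono sum_norm_power2_weighted_le) (simp add: rows)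
  have "cmod (cinner (schur (A' ** B') R *v u) w) \<le> (\<Sum>k\<in>UNIV. opnorm R * f k * g k)"
    unfolding cinner_schur_mult f_def g_def
    by (intro order.trans[OF norm_sum] sum_mono norm_cinner_le_opnorm)
  also have "\<dots> = opnorm R * (\<Sum>k\<in>UNIV. \<bar>f k\<bar> * \<bar>g k\<bar>)"
    by (simp add: f_def g_def sum_distrib_left mult.assoc)
  also have "\<dots> \<le> opnorm R * (L2_set f UNIV * L2_set g UNIV)"
    by (intro mult_left_mono L2_set_mult_ineq opnorm_nonneg)
  also have "\<dots> \<le> opnorm R * (sqrt (a * (norm u)\<^sup>2) * sqrt (a * (norm w)\<^sup>2))"
    by (intro mult_left_mono mult_mono f g opnorm_nonneg L2_set_nonneg) (simp_all add: \<open>0 \<le> a\<close>)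
  also have "\<dots> = a * opnorm R * norm u * norm w"
    using \<open>0 \<le> a\<close> by (simp add: real_sqrt_mult)
  finally show "cmod (cinner (schur (A' ** B') R *v u) w) \<le> a * opnorm R * norm u * norm w" .
qed

definition cconj :: "complex^'n::finite^'n \<Rightarrow> complex^'n^'n" where
  "cconj M = (\<chi> i j. cnj (M $ i $ j))"

lemma cconj_mult: "cconj (A ** B) = cconj A ** cconj B"
  by (simp add: cconj_def matrix_matrix_mult_def vec_eq_iff)

lemma opnorm_cconj_le:
  fixes M :: "complex^'n::finite^'n"
  shows "opnorm (cconj M) \<le> opnorm M"
proof (rule opnorm_bound[OF opnorm_nonneg])
  fix v :: "complex^'n"
  have norm_cnj: "norm (\<chi> j. cnj (x $ j)) = norm x" for x :: "complex^'n"
    by (simp add: norm_vec_def)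
  have "cconj M *v v = (\<chi> i. cnj ((M *v (\<chi> j. cnj (v $ j))) $ i))"
    by (simp add: cconj_def matrix_vector_mult_def vec_eq_iff)
  then have "norm (cconj M *v v) = norm (M *v (\<chi> j. cnj (v $ j)))" by (simp add: norm_cnj)
  also have "\<dots> \<le> opnorm M * norm v"
    using norm_matrix_vector_mult_le[of M "\<chi> j. cnj (v $ j)"] by (simp add: norm_cnj)
  finally show "norm (cconj M *v v) \<le> opnorm M * norm v" .
qed

lemma cinner_schur_cconj_ones:
  "cinner (schur T (cconj W) *v (\<chi> i. 1)) (\<chi> i. 1) = mtrace (cadj W ** T)"
proof -
  have "cinner (schur T (cconj W) *v (\<chi> i. 1)) (\<chi> i. 1)
      = (\<Sum>x\<in>UNIV. \<Sum>y\<in>UNIV. cnj (W $ x $ y) * T $ x $ y)"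
    by (simp add: schur_def cconj_def cinner_def matrix_vector_mult_def mult.commute)
  also have "\<dots> = mtrace (cadj W ** T)"
    by (simp add: mtrace_def matrix_matrix_mult_def cadj_def) (rule sum.swap)
  finally show ?thesis .
qed

lemma multiplier_norms_eqI:
  assumes "0 \<le> t" and upper: "\<And>R. opnorm (schur T R) \<le> t * opnorm R"
    and "R\<^sub>0 \<in> \<T>" "opnorm R\<^sub>0 \<le> 1" and lower: "t \<le> opnorm (schur T R\<^sub>0)"
  shows "multiplier_norm T = t" "restricted_multiplier_norm T \<T> = t"
proof -
  have bound: "opnorm (schur T R) \<le> t" if "opnorm R \<le> 1" for R
    using upper[of R] mult_left_mono[OF that \<open>0 \<le> t\<close>] by simp
  have sup_eq: "(SUP R\<in>X. opnorm (schur T R)) = t" if "R\<^sub>0 \<in> X" "X \<subseteq> {R. opnorm R \<le> 1}" for X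
  proof (rule antisym)
    show "(SUP R\<in>X. opnorm (schur T R)) \<le> t" using that bound by (intro cSUP_least) auto
    have "bdd_above ((\<lambda>R. opnorm (schur T R)) ` X)" using that bound by (intro bdd_aboveI2) auto
    then show "t \<le> (SUP R\<in>X. opnorm (schur T R))" using that lower by (intro cSUP_upper2) auto
  qed
  show "multiplier_norm T = t"
    unfolding multiplier_norm_def by (rule sup_eq) (use \<open>opnorm R\<^sub>0 \<le> 1\<close> in auto)
  show "restricted_multiplier_norm T \<T> = t"
    unfolding restricted_multiplier_norm_def
    by (rule sup_eq) (use \<open>R\<^sub>0 \<in> \<T>\<close> \<open>opnorm R\<^sub>0 \<le> 1\<close> in auto)
qed

section \<open>The commutant of a transitive permutation representation\<close>

lemma cadj_in_commutant:
  assumes unitary: "\<And>U. U \<in> S \<Longrightarrow> cadj U ** U = mat 1 \<and> U ** cadj U = mat 1"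
    and "M \<in> commutant S"
  shows "cadj M \<in> commutant S"
  unfolding commutant_def
proof (intro CollectI ballI)
  fix U assume "U \<in> S"
  then have "M ** U = U ** M" using \<open>M \<in> commutant S\<close> by (simp add: commutant_def)
  have "cadj U ** M = cadj U ** M ** (U ** cadj U)" using unitary[OF \<open>U \<in> S\<close>] by simp
  also have "\<dots> = cadj U ** (M ** U) ** cadj U" by (simp add: matrix_mul_assoc)
  also have "\<dots> = (cadj U ** U) ** M ** cadj U" by (simp add: \<open>M ** U = U ** M\<close> matrix_mul_assoc)
  also have "\<dots> = M ** cadj U" using unitary[OF \<open>U \<in> S\<close>] by simp
  finally have "cadj (cadj U ** M) = cadj (M ** cadj U)" by simp
  then show "cadj M ** U = U ** cadj M" by (simp add: cadj_mult)
qed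

lemma cconj_in_commutant:
  assumes "\<And>U. U \<in> S \<Longrightarrow> cconj U = U" and "M \<in> commutant S"
  shows "cconj M \<in> commutant S"
  unfolding commutant_def
proof (intro CollectI ballI)
  fix U assume "U \<in> S"
  then have "M ** U = U ** M" "cconj U = U" using assms by (auto simp: commutant_def)
  then have "cconj M ** cconj U = cconj U ** cconj M"
    unfolding cconj_mult[symmetric] by (simp only: \<open>M ** U = U ** M\<close>)
  then show "cconj M ** U = U ** cconj M" using \<open>cconj U = U\<close> by simp
qed

lemma matrix_mult_perm_rep_entry: "(M ** perm_rep \<phi> g) $ i $ j = M $ i $ \<phi> g j"
  unfolding matrix_matrix_mult_def perm_rep_def by (simp add: if_distrib if_distribR cong: if_cong)

lemma perm_rep_matrix_mult_entry: "inj (\<phi> g) \<Longrightarrow> (perm_rep \<phi> g ** M) $ \<phi> g i $ j = M $ i $ j"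
  unfolding matrix_matrix_mult_def perm_rep_def by (simp add: inj_eq if_distrib if_distribR cong: if_cong)

lemma cconj_perm_rep: "cconj (perm_rep \<phi> g) = perm_rep \<phi> g"
  by (simp add: cconj_def perm_rep_def vec_eq_iff)

lemma perm_rep_unitary:
  assumes "bij (\<phi> g)"
  shows "cadj (perm_rep \<phi> g) ** perm_rep \<phi> g = mat 1"
    and "perm_rep \<phi> g ** cadj (perm_rep \<phi> g) = mat 1"
proof -
  have "inj (\<phi> g)" using assms by (rule bij_is_inj)
  then have "(cadj (perm_rep \<phi> g) ** perm_rep \<phi> g) $ i $ j = mat 1 $ i $ j" for i j
    unfolding matrix_mult_perm_rep_entry by (simp add: cadj_def perm_rep_def mat_def inj_eq)
  then show "cadj (perm_rep \<phi> g) ** perm_rep \<phi> g = mat 1" by (simp add: vec_eq_iff)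
  have "(perm_rep \<phi> g ** cadj (perm_rep \<phi> g)) $ i $ j = mat 1 $ i $ j" for i j
  proof -
    obtain i' where "i = \<phi> g i'" using assms by (metis bij_pointE)
    show ?thesis
      unfolding \<open>i = \<phi> g i'\<close> perm_rep_matrix_mult_entry[of \<phi> g, OF \<open>inj (\<phi> g)\<close>]
      by (simp add: cadj_def perm_rep_def mat_def)
  qed
  then show "perm_rep \<phi> g ** cadj (perm_rep \<phi> g) = mat 1" by (simp add: vec_eq_iff)
qed

context
  fixes G :: "('g, 'b) monoid_scheme" and \<phi> :: "'g \<Rightarrow> 'x::finite \<Rightarrow> 'x"
  assumes transitive: "transitive_action G (UNIV :: 'x set) \<phi>"
begin

interpretation transitive_action G "UNIV :: 'x set" \<phi> by (rule transitive)

lemma bij_action: "g \<in> carrier G \<Longrightarrow> bij (\<phi> g)"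
  using bij_prop0 by (simp add: Bij_def)

lemma cadj_in_commutant_perm_rep:
  "M \<in> commutant (perm_rep \<phi> ` carrier G) \<Longrightarrow> cadj M \<in> commutant (perm_rep \<phi> ` carrier G)"
  by (rule cadj_in_commutant) (auto simp: perm_rep_unitary bij_action)

lemma cconj_in_commutant_perm_rep:
  "M \<in> commutant (perm_rep \<phi> ` carrier G) \<Longrightarrow> cconj M \<in> commutant (perm_rep \<phi> ` carrier G)"
  by (rule cconj_in_commutant) (auto simp: cconj_perm_rep)

lemma commutant_perm_rep_diag:
  assumes "M \<in> commutant (perm_rep \<phi> ` carrier G)"
  shows "M $ x $ x = mtrace M / of_nat CARD('x)"
proof -
  have diag: "M $ y $ y = M $ x $ x" for y
  proof -
    obtain g where "g \<in> carrier G" "\<phi> g x = y" using unique_orbit by blast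
    have "M $ \<phi> g x $ \<phi> g x = (M ** perm_rep \<phi> g) $ \<phi> g x $ x"
      by (simp add: matrix_mult_perm_rep_entry)
    also have "\<dots> = (perm_rep \<phi> g ** M) $ \<phi> g x $ x"
      using assms \<open>g \<in> carrier G\<close> by (simp add: commutant_def)
    also have "\<dots> = M $ x $ x"
      using bij_action[OF \<open>g \<in> carrier G\<close>] by (simp add: perm_rep_matrix_mult_entry bij_is_inj)
    finally show ?thesis using \<open>\<phi> g x = y\<close> by simp
  qed
  have "mtrace M = (\<Sum>y::'x\<in>UNIV. M $ x $ x)" unfolding mtrace_def by (intro sum.cong refl diag)
  then show ?thesis by simp
qed

end

locale invariant_polar = polar_eigenbasis T B
  for T :: "complex^'x::finite^'x" and B +
  fixes G :: "('g, 'b) monoid_scheme" and \<phi> :: "'g \<Rightarrow> 'x \<Rightarrow> 'x"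
  assumes transitive: "transitive_action G (UNIV :: 'x set) \<phi>"
    and T_in_commutant: "T \<in> commutant (perm_rep \<phi> ` carrier G)"
begin

lemma matfun_in_commutant_perm_rep:
  "matfun (cadj T ** T) B f \<in> commutant (perm_rep \<phi> ` carrier G)"
  by (intro matfun_in_commutant_polar T_in_commutant cadj_in_commutant_perm_rep[OF transitive])

lemma mabs_in_commutant: "mabs T \<in> commutant (perm_rep \<phi> ` carrier G)"
  unfolding mabs_eq_matfun by (rule matfun_in_commutant_perm_rep)

lemma isometric_part_in_commutant: "isometric_part \<in> commutant (perm_rep \<phi> ` carrier G)"
  unfolding isometric_part_def by (intro mult_in_commutant T_in_commutant matfun_in_commutant_perm_rep)

definition normalized_trace :: real where
  "normalized_trace = Re (mtrace (mabs T)) / real CARD('x)"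

lemma mabs_diag: "mabs T $ x $ x = of_real normalized_trace"
proof -
  have "mabs T $ x $ x = mtrace (mabs T) / of_nat CARD('x)"
    by (rule commutant_perm_rep_diag[OF transitive mabs_in_commutant])
  moreover have "Im (mabs T $ x $ x) = 0"
    using psd_mabs by (simp add: psd_def flip: cinner_basis_vec)
  ultimately show ?thesis by (simp add: normalized_trace_def complex_eq_iff)
qed

lemma mtrace_mabs: "mtrace (mabs T) / of_nat CARD('x) = of_real normalized_trace"
proof -
  fix x :: 'x
  show ?thesis
    using commutant_perm_rep_diag[OF transitive mabs_in_commutant, of x] mabs_diag[of x] by simp
qed

lemma normalized_trace_nonneg: "0 \<le> normalized_trace"
proof -
  fix x :: 'x
  have "0 \<le> Re (cinner (mabs T *v basis_vec x) (basis_vec x))" using psd_mabs by (simp add: psd_def)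
  then show ?thesis by (simp add: cinner_basis_vec mabs_diag)
qed

lemma row_norm_isometric_part_mult:
  assumes "cadj Q = Q" "Q ** Q = mabs T"
  shows "(\<Sum>k\<in>UNIV. (cmod ((isometric_part ** Q) $ x $ k))\<^sup>2) = normalized_trace"
proof -
  let ?W = isometric_part
  have "(?W ** Q) ** cadj (?W ** Q) = ?W ** (Q ** Q) ** cadj ?W"
    by (simp add: cadj_mult assms(1) matrix_mul_assoc)
  also have "\<dots> = T ** cadj ?W" by (simp add: assms(2) polar_decomposition)
  finally have WQ: "(?W ** Q) ** cadj (?W ** Q) = T ** cadj ?W" .
  have "T ** cadj ?W \<in> commutant (perm_rep \<phi> ` carrier G)"
    by (intro mult_in_commutant T_in_commutant cadj_in_commutant_perm_rep[OF transitive]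
        isometric_part_in_commutant)
  moreover have "mtrace (T ** cadj ?W) = mtrace (mabs T)"
    using trace_mul_sym[of T "cadj ?W"] cadj_isometric_part_mult by (simp add: mtrace_def trace_def)
  ultimately have "(T ** cadj ?W) $ x $ x = of_real normalized_trace"
    using commutant_perm_rep_diag[OF transitive] mtrace_mabs by metis
  then have "of_real (\<Sum>k\<in>UNIV. (cmod ((?W ** Q) $ x $ k))\<^sup>2) = (of_real normalized_trace :: complex)"
    by (simp only: row_norm_power2 WQ)
  then show ?thesis by (simp only: of_real_eq_iff)
qed

lemma column_norm_mabs_square_root:
  assumes "cadj Q = Q" "Q ** Q = mabs T"
  shows "(\<Sum>k\<in>UNIV. (cmod (Q $ k $ y))\<^sup>2) = normalized_trace"
proof -
  have "of_real (\<Sum>k\<in>UNIV. (cmod (Q $ k $ y))\<^sup>2) = (of_real normalized_trace :: complex)"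
    by (simp only: column_norm_power2 assms mabs_diag)
  then show ?thesis by (simp only: of_real_eq_iff)
qed

lemma opnorm_schur_le: "opnorm (schur T R) \<le> normalized_trace * opnorm R"
proof -
  obtain Q where Q: "cadj Q = Q" "Q ** Q = mabs T" by (rule mabs_square_root)
  have "opnorm (schur ((isometric_part ** Q) ** Q) R) \<le> normalized_trace * opnorm R"
    by (intro opnorm_schur_mult_le normalized_trace_nonneg)
      (simp_all add: row_norm_isometric_part_mult[OF Q] column_norm_mabs_square_root[OF Q])
  moreover have "(isometric_part ** Q) ** Q = T"
    using polar_decomposition Q(2) by (simp flip: matrix_mul_assoc)
  ultimately show ?thesis by simp
qed

lemma cconj_isometric_part_in_commutant:
  "cconj isometric_part \<in> commutant (perm_rep \<phi> ` carrier G)"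
  by (intro cconj_in_commutant_perm_rep[OF transitive] isometric_part_in_commutant)

lemma opnorm_cconj_isometric_part_le: "opnorm (cconj isometric_part) \<le> 1"
  using opnorm_cconj_le opnorm_isometric_part_le by (rule order.trans)

lemma opnorm_schur_cconj_isometric_part_ge:
  "normalized_trace \<le> opnorm (schur T (cconj isometric_part))"
proof -
  let ?S = "schur T (cconj isometric_part)" and ?one = "\<chi> i::'x. (1::complex)"
  have "norm ?one * norm ?one = real CARD('x)"
    using norm_vec_power2[of ?one] by (simp add: power2_eq_square)
  have "cinner (?S *v ?one) ?one = of_real (real CARD('x) * normalized_trace)"
    using mtrace_mabs by (simp add: cinner_schur_cconj_ones cadj_isometric_part_mult field_simps)
  then have "real CARD('x) * normalized_trace = cmod (cinner (?S *v ?one) ?one)"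
    using normalized_trace_nonneg by (simp add: norm_mult)
  also have "\<dots> \<le> opnorm ?S * (norm ?one * norm ?one)"
    using norm_cinner_le_opnorm[of ?S ?one ?one] by (simp add: mult.assoc)
  finally have "real CARD('x) * normalized_trace \<le> opnorm ?S * real CARD('x)"
    unfolding \<open>norm ?one * norm ?one = real CARD('x)\<close> .
  then show ?thesis by (simp add: mult.commute)
qed

end

theorem theorem4p4:
  fixes G :: "('g, 'b) monoid_scheme" and \<phi> :: "'g \<Rightarrow> 'x::finite \<Rightarrow> 'x"
    and T :: "complex^'x^'x" and x0 :: 'x
  assumes "finite (carrier G)"
    and "transitive_action G (UNIV :: 'x set) \<phi>"
    and "T \<in> commutant (perm_rep \<phi> ` carrier G)"
  shows "multiplier_norm T = restricted_multiplier_norm T (commutant (perm_rep \<phi> ` carrier G))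
    \<and> complex_of_real (restricted_multiplier_norm T (commutant (perm_rep \<phi> ` carrier G)))
        = mtrace (mabs T) / of_nat CARD('x)
    \<and> mtrace (mabs T) / of_nat CARD('x) = cinner (mabs T *v basis_vec x0) (basis_vec x0)"
proof -
  obtain B where "eigenbasis (cadj T ** T) B"
    using hermitian_eigenbasis[of "cadj T ** T"] by (auto simp: cadj_mult)
  then interpret invariant_polar T B G \<phi>
    using assms(2,3) by (intro invariant_polar.intro invariant_polar_axioms.intro polar_eigenbasis.intro)
  have "multiplier_norm T = normalized_trace"
    "restricted_multiplier_norm T (commutant (perm_rep \<phi> ` carrier G)) = normalized_trace"
    by (rule multiplier_norms_eqI[OF normalized_trace_nonneg opnorm_schur_le
          cconj_isometric_part_in_commutant opnorm_cconj_isometric_part_le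
          opnorm_schur_cconj_isometric_part_ge])+
  then show ?thesis using mtrace_mabs mabs_diag[of x0] by (simp add: cinner_basis_vec)
qed

end
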